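(* For every regular matroid $\mathcal M$ (with fixed TU representing matrix $M$), the face poset $\mathcal{FP}^c(\mathcal M)$ of the Voronoi cell at $0$ of the lattice of integer cuts $\Gamma(\mathcal M)$ is isomorphic to the poset $\mathcal{CAC}(\mathcal M)$ of coherent acyclic orientations of submatroids of $\mathcal M$.
   Context: Let $\mathcal M$ be a regular matroid on a finite ground set $E$, represented over $\mathbb R$ by a totally unimodular matrix $M$ with columns $c_e$, $e\in E$; $\mathbb R^E$ has standard basis $\{e\}$ and Euclidean inner product. The lattice of integer cuts is $\Gamma(\mathcal M)=\operatorname{Row}(M)\cap\mathbb Z^E$ with the inherited inner product. Its Voronoi cell at $0$ is $\{x\in\operatorname{Row}(M):\|x\|\le\|x-\mu\|\ \forall\mu\in\Gamma(\mathcal M)\}$, and $\mathcal{FP}^c(\mathcal M)$ is the poset of its nonempty faces ordered by inclusion. An oriented submatroid is a pair $(S,\varepsilon)$ with $S\subseteq E$, $\varepsilon:S\to\{\pm1\}$; let $M^\varepsilon$ be obtained from $M$ by replacing $c_f$ by $\varepsilon_f c_f$ for $f\in S$. $(S,\varepsilon)$ is coherent acyclic if for every $e\in S$ there is $z\in\mathbb Z_{\ge0}^E$ supported in $S$ with $e+z\in\operatorname{Row}(M^\varepsilon)\cap\mathbb Z^E$. $\mathcal{CAC}(\mathcal M)$ is the set of coherent acyclic oriented submatroids ordered by $(S,\varepsilon)\le(S',\varepsilon')$ iff $S'\subseteq S$ and $\varepsilon'=\varepsilon|_{S'}$. *)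

theory Defs
  imports "HOL-Analysis.Analysis"
begin

text \<open>A real matrix with rows indexed by the finite type 'r and columns indexed by
  the finite ground set (type) 'e. The column c_e of M is (\<lambda>r. M $ r $ e).\<close>

definition subdet :: "real^'e^'r \<Rightarrow> nat \<Rightarrow> (nat \<Rightarrow> 'r) \<Rightarrow> (nat \<Rightarrow> 'e) \<Rightarrow> real" where
  "subdet M k f g = (\<Sum>p\<in>{p. p permutes {..<k}}. of_int (sign p) * (\<Prod>i<k. M $ f i $ g (p i)))"

text \<open>Totally unimodular: every square submatrix has determinant in {-1,0,1}.
  (Non-injective row/column choices give determinant 0 anyway.)\<close>
definition totally_unimodular :: "real^'e^'r \<Rightarrow> bool" where
  "totally_unimodular M \<longleftrightarrow> (\<forall>k f g. subdet M k f g \<in> {-1, 0, 1})"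

definition row_space :: "real^'e^'r \<Rightarrow> (real^'e) set" where
  "row_space M = {x. \<exists>c :: real^'r. \<forall>e. x $ e = (\<Sum>r\<in>UNIV. c $ r * M $ r $ e)}"

definition integer_vectors :: "(real^'e) set" where
  "integer_vectors = {x. \<forall>e. x $ e \<in> \<int>}"

definition cut_lattice :: "real^'e^'r \<Rightarrow> (real^'e) set" where
  "cut_lattice M = row_space M \<inter> integer_vectors"

definition voronoi_cell :: "real^'e^'r \<Rightarrow> (real^'e) set" where
  "voronoi_cell M = {x \<in> row_space M. \<forall>\<mu> \<in> cut_lattice M. norm x \<le> norm (x - \<mu>)}"

definition face_poset :: "real^'e^'r \<Rightarrow> (real^'e) set set" where
  "face_poset M = {F. F face_of voronoi_cell M \<and> F \<noteq> {}}"

text \<open>Oriented submatroids (S, \<epsilon>): S \<subseteq> E, \<epsilon> : S \<rightarrow> {\<plusminus>1}; we represent \<epsilon> canonically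
  as a function 'e \<Rightarrow> int that is \<plusminus>1 on S and 0 outside S.\<close>
definition oriented_sub :: "'e set \<times> ('e \<Rightarrow> int) \<Rightarrow> bool" where
  "oriented_sub Se \<longleftrightarrow> (\<forall>f\<in>fst Se. snd Se f \<in> {1, -1}) \<and> (\<forall>f. f \<notin> fst Se \<longrightarrow> snd Se f = 0)"

definition reorient :: "real^'e^'r \<Rightarrow> 'e set \<Rightarrow> ('e \<Rightarrow> int) \<Rightarrow> real^'e^'r" where
  "reorient M S \<epsilon> = (\<chi> r e. (if e \<in> S then of_int (\<epsilon> e) else 1) * M $ r $ e)"

definition coherent_acyclic :: "real^'e^'r \<Rightarrow> 'e set \<times> ('e \<Rightarrow> int) \<Rightarrow> bool" where
  "coherent_acyclic M Se \<longleftrightarrow> oriented_sub Se \<and>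
     (\<forall>e\<in>fst Se. \<exists>z :: real^'e. (\<forall>f. z $ f \<in> \<int> \<and> z $ f \<ge> 0) \<and> (\<forall>f. f \<notin> fst Se \<longrightarrow> z $ f = 0) \<and>
        axis e 1 + z \<in> row_space (reorient M (fst Se) (snd Se)) \<inter> integer_vectors)"

definition CAC :: "real^'e^'r \<Rightarrow> ('e set \<times> ('e \<Rightarrow> int)) set" where
  "CAC M = {Se. coherent_acyclic M Se}"

definition cac_le :: "'e set \<times> ('e \<Rightarrow> int) \<Rightarrow> 'e set \<times> ('e \<Rightarrow> int) \<Rightarrow> bool" where
  "cac_le Se Se' \<longleftrightarrow> fst Se' \<subseteq> fst Se \<and> (\<forall>f\<in>fst Se'. snd Se' f = snd Se f)"

definition poset_isomorphic :: "'a set \<Rightarrow> ('a \<Rightarrow> 'a \<Rightarrow> bool) \<Rightarrow> 'b set \<Rightarrow> ('b \<Rightarrow> 'b \<Rightarrow> bool) \<Rightarrow> bool" where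
  "poset_isomorphic A leA B leB \<longleftrightarrow>
     (\<exists>\<phi>. bij_betw \<phi> A B \<and> (\<forall>a\<in>A. \<forall>b\<in>A. leA a b \<longleftrightarrow> leB (\<phi> a) (\<phi> b)))"

end

(*
  Total unimodularity makes every elementary vector of Row(M), scaled to 1 in one coordinate, a
  0/+-1 vector, and every vector of Row(M) a conformal sum of positive multiples of such vectors.
  Hence the Voronoi cell of the integer cuts is {x in Row(M). 2 x.w <= |w|_1 for all w in Row(M)},
  its nonempty faces are the sets F_w on which the inequality of some w in Row(M) is tight, and
  F_w is contained in F_w' iff w' is conformal to w, i.e. the sign vector of w' is a restriction
  of that of w. The sign vectors of the vectors of Row(M) are exactly the coherent acyclic oriented
  submatroids, so w |-> F_w and w |-> sign(w) induce the isomorphism.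
*)

theory Submission
  imports Defs "Jordan_Normal_Form.Determinant"
begin

(* Jordan_Normal_Form's vector indexing and scalar product clash with the notation of Defs. *)
no_notation Matrix.vec_index (infixl "$" 100)
no_notation Matrix.scalar_prod (infix "\<bullet>" 70)

section \<open>Row space\<close>

lemma row_space_iff_inner_column:
  "x \<in> row_space M \<longleftrightarrow> (\<exists>l. \<forall>e. x $ e = l \<bullet> column e M)"
  unfolding row_space_def inner_vec_def column_def by (simp add: mult.commute)

lemma subspace_row_space: "subspace (row_space M)"
proof -
  have "x + y \<in> row_space M" if xy: "x \<in> row_space M" "y \<in> row_space M" for x y
  proof -
    obtain p q where "\<forall>e. x $ e = p \<bullet> column e M" "\<forall>e. y $ e = q \<bullet> column e M"
      using xy unfolding row_space_iff_inner_column by blast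
    then show ?thesis
      unfolding row_space_iff_inner_column by (auto intro!: exI[of _ "p + q"] simp: inner_add_left)
  qed
  moreover have "c *\<^sub>R x \<in> row_space M" if x: "x \<in> row_space M" for x c
  proof -
    obtain p where "\<forall>e. x $ e = p \<bullet> column e M"
      using x unfolding row_space_iff_inner_column by blast
    then show ?thesis unfolding row_space_iff_inner_column by (auto intro!: exI[of _ "c *\<^sub>R p"])
  qed
  moreover have "0 \<in> row_space M"
    unfolding row_space_iff_inner_column by (rule exI[of _ 0]) simp
  ultimately show ?thesis unfolding subspace_def by blast
qed

lemma span_row_space [simp]: "span (row_space M) = row_space M"
  using span_eq_iff subspace_row_space by blast

lemma orthogonal_decomposition:
  fixes x :: "'a::euclidean_space"
  obtains y z where "y \<in> span S" "\<And>w. w \<in> span S \<Longrightarrow> z \<bullet> w = 0" "x = y + z"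
  using orthogonal_subspace_decomp_exists[of S x] unfolding real_inner_class.orthogonal_def by metis

lemma independent_image_basis:
  fixes col :: "'a \<Rightarrow> 'b::euclidean_space"
  obtains B where "B \<subseteq> Z" "inj_on col B" "independent (col ` B)" "col ` Z \<subseteq> span (col ` B)"
proof -
  obtain Bv where Bv: "Bv \<subseteq> col ` Z" "independent Bv" "col ` Z \<subseteq> span Bv"
    using maximal_independent_subset[of "col ` Z"] by metis
  then show thesis using that subset_image_inj[THEN iffD1, OF Bv(1)] by metis
qed

lemma span_image_sum:
  fixes col :: "'a::finite \<Rightarrow> 'b::euclidean_space"
  assumes "inj_on col G" "x \<in> span (col ` G)"
  obtains u where "x = (\<Sum>h\<in>G. u h *\<^sub>R col h)"
proof -
  obtain u' where "x = (\<Sum>w\<in>col ` G. u' w *\<^sub>R w)"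
    using span_finite[of "col ` G"] assms(2) by auto
  then have "x = (\<Sum>h\<in>G. u' (col h) *\<^sub>R col h)"
    using sum.reindex[OF assms(1), of "\<lambda>w. u' w *\<^sub>R w"] by simp
  then show thesis by (rule that)
qed

lemma exists_vec_nth_nonzero: "w \<noteq> 0 \<Longrightarrow> \<exists>f. w $ f \<noteq> 0"
  by (metis Finite_Cartesian_Product.vec_eq_iff zero_index)

section \<open>Minors of totally unimodular matrices\<close>

lemma subdet_eq_det: "subdet M k f g = Determinant.det (Matrix.mat k k (\<lambda>(i, j). M $ f i $ g j))"
  unfolding subdet_def Determinant.det_def by (simp add: atLeast0LessThan)

lemma det_nonzero_if_rows_independent:
  fixes a :: "nat \<Rightarrow> nat \<Rightarrow> real"
  assumes "\<And>v i. (\<And>j. j < k \<Longrightarrow> (\<Sum>i<k. v i * a i j) = 0) \<Longrightarrow> i < k \<Longrightarrow> v i = 0"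
  shows "Determinant.det (Matrix.mat k k (\<lambda>(i, j). a i j)) \<noteq> 0"
proof
  let ?A = "Matrix.mat k k (\<lambda>(i, j). a i j)"
  assume "Determinant.det ?A = 0"
  then have "Determinant.det (transpose_mat ?A) = 0" by (subst det_transpose) auto
  then obtain v where v: "v \<in> carrier_vec k" "v \<noteq> 0\<^sub>v k" "transpose_mat ?A *\<^sub>v v = 0\<^sub>v k"
    using det_0_iff_vec_prod_zero[of "transpose_mat ?A" k] by auto
  have "(\<Sum>i<k. Matrix.vec_index v i * a i j) = 0" if "j < k" for j
  proof -
    have "Matrix.vec_index (transpose_mat ?A *\<^sub>v v) j = 0" using v(3) that by simp
    then show ?thesis using that v(1)
      by (simp add: scalar_prod_def atLeast0LessThan mult.commute)
  qed
  then have "Matrix.vec_index v i = 0" if "i < k" for i using assms that by blast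
  then have "v = 0\<^sub>v k" using v(1) by (auto simp: Matrix.vec_eq_iff)
  then show False using v(2) by contradiction
qed

lemma exists_independent_rows:
  fixes N :: "real^'e^'r"
  obtains R where "inj_on (\<lambda>\<rho>. Finite_Cartesian_Product.row \<rho> N) R"
    "independent ((\<lambda>\<rho>. Finite_Cartesian_Product.row \<rho> N) ` R)" "card R = rank N"
proof -
  obtain B where B: "B \<subseteq> Finite_Cartesian_Product.rows N" "independent B"
    "Finite_Cartesian_Product.rows N \<subseteq> span B"
    using maximal_independent_subset by metis
  then obtain R where R: "inj_on (\<lambda>\<rho>. Finite_Cartesian_Product.row \<rho> N) R"
    "B = (\<lambda>\<rho>. Finite_Cartesian_Product.row \<rho> N) ` R"
    using subset_image_inj[of B "\<lambda>\<rho>. Finite_Cartesian_Product.row \<rho> N" UNIV]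
    by (auto simp: Finite_Cartesian_Product.rows_def full_SetCompr_eq)
  have "card B = rank N" using basis_card_eq_dim[OF B(1,3,2)] by (simp add: row_rank_def)
  then have "card R = rank N" using card_image[OF R(1)] R(2) by simp
  then show thesis using that R(1) B(2) R(2) by simp
qed

lemma rank_restrict_columns:
  fixes M :: "real^'e^'r"
  assumes "independent ((\<lambda>h. column h M) ` G)" "inj_on (\<lambda>h. column h M) G"
  shows "rank (\<chi> \<rho> h. if h \<in> G then M $ \<rho> $ h else 0) = card G"
proof -
  define N :: "real^'e^'r" where "N = (\<chi> \<rho> h. if h \<in> G then M $ \<rho> $ h else 0)"
  have colN: "column h N = (if h \<in> G then column h M else 0)" for h
    by (auto simp: column_def N_def Finite_Cartesian_Product.vec_eq_iff)
  have "Finite_Cartesian_Product.columns N \<subseteq> insert 0 ((\<lambda>h. column h M) ` G)"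
    "(\<lambda>h. column h M) ` G \<subseteq> Finite_Cartesian_Product.columns N"
    unfolding Finite_Cartesian_Product.columns_def by (auto simp: colN)
  then have "span (Finite_Cartesian_Product.columns N) = span ((\<lambda>h. column h M) ` G)"
    by (metis span_insert_0 span_mono subset_antisym)
  then have "rank N = dim ((\<lambda>h. column h M) ` G)"
    by (metis column_rank_def dim_span)
  also have "\<dots> = card G"
    using dim_eq_card_independent[OF assms(1)] card_image[OF assms(2)] by simp
  finally show ?thesis by (simp add: N_def)
qed

text \<open>Take k = card G rows of M that are linearly independent on the columns G.\<close>
lemma independent_columns_nonsingular_minor:
  fixes M :: "real^'e^'r"
  assumes indep: "independent ((\<lambda>h. column h M) ` G)" and inj: "inj_on (\<lambda>h. column h M) G"
    and gg: "bij_betw gg {..<card G} G"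
  obtains rr where "Determinant.det (Matrix.mat (card G) (card G) (\<lambda>(i, j). M $ rr i $ gg j)) \<noteq> 0"
proof -
  define k where "k = card G"
  define N :: "real^'e^'r" where "N = (\<chi> \<rho> h. if h \<in> G then M $ \<rho> $ h else 0)"
  obtain R where R: "inj_on (\<lambda>\<rho>. Finite_Cartesian_Product.row \<rho> N) R"
    "independent ((\<lambda>\<rho>. Finite_Cartesian_Product.row \<rho> N) ` R)" "card R = rank N"
    by (rule exists_independent_rows)
  have "rank N = k" unfolding N_def k_def by (rule rank_restrict_columns[OF indep inj])
  obtain rr where rr: "bij_betw rr {..<k} R"
    using ex_bij_betw_nat_finite[of R] R(3) \<open>rank N = k\<close> by (auto simp: atLeast0LessThan)
  have "v i = 0" if v: "\<And>j. j < k \<Longrightarrow> (\<Sum>i<k. v i * M $ rr i $ gg j) = 0" and "i < k" for v i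
  proof -
    define r where "r = (\<lambda>i. Finite_Cartesian_Product.row (rr i) N)"
    have inj_r: "inj_on r {..<k}"
      using comp_inj_on[of rr "{..<k}" "\<lambda>\<rho>. Finite_Cartesian_Product.row \<rho> N"] rr R(1)
      by (simp add: r_def bij_betw_def o_def)
    have "(\<Sum>i<k. v i *\<^sub>R r i) $ h = 0" for h
    proof (cases "h \<in> G")
      case True
      then obtain j where "j < k" "gg j = h" using gg by (force simp: bij_betw_def k_def)
      then show ?thesis using v[of j] True by (simp add: r_def N_def Finite_Cartesian_Product.row_def)
    qed (simp add: r_def N_def Finite_Cartesian_Product.row_def)
    then have "(\<Sum>i<k. v i *\<^sub>R r i) = 0"
      by (simp add: Finite_Cartesian_Product.vec_eq_iff)
    moreover define c where "c = v \<circ> the_inv_into {..<k} r"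
    moreover have c: "c (r i) = v i" if "i < k" for i
      using the_inv_into_f_f[OF inj_r] that by (simp add: c_def)
    ultimately have "(\<Sum>w\<in>r ` {..<k}. c w *\<^sub>R w) = 0"
      by (subst sum.reindex[OF inj_r]) (simp add: c)
    moreover have "r ` {..<k} = (\<lambda>\<rho>. Finite_Cartesian_Product.row \<rho> N) ` R"
      using rr unfolding r_def bij_betw_def by auto
    ultimately have "\<forall>w\<in>r ` {..<k}. c w = 0"
      using R(2) unfolding independent_explicit by metis
    then show "v i = 0" using c[OF \<open>i < k\<close>] \<open>i < k\<close> by simp
  qed
  then show thesis
    using that det_nonzero_if_rows_independent[of k "\<lambda>i j. M $ rr i $ gg j"] k_def by blast
qed

text \<open>Cramer's rule on a nonsingular minor: the coefficient is a ratio of two minors of a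
  totally unimodular matrix, the denominator being nonzero.\<close>
lemma TU_column_coefficient:
  fixes M :: "real^'e^'r"
  assumes TU: "totally_unimodular M"
    and indep: "independent ((\<lambda>h. column h M) ` G)" and inj: "inj_on (\<lambda>h. column h M) G"
    and expansion: "column f M = (\<Sum>h\<in>G. u h *\<^sub>R column h M)" and "e \<in> G"
  shows "u e \<in> {-1, 0, 1}"
proof -
  define k where "k = card G"
  obtain gg where gg: "bij_betw gg {..<k} G"
    using ex_bij_betw_nat_finite[of G] by (auto simp: k_def atLeast0LessThan)
  then obtain i0 where i0: "i0 < k" "gg i0 = e"
    using \<open>e \<in> G\<close> by (force simp: bij_betw_def)
  obtain rr where det_A: "Determinant.det (Matrix.mat k k (\<lambda>(i, j). M $ rr i $ gg j)) \<noteq> 0"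
    using independent_columns_nonsingular_minor[OF indep inj] gg k_def by metis
  define A where "A = Matrix.mat k k (\<lambda>(i, j). M $ rr i $ gg j)"
  define x where "x = Matrix.vec k (\<lambda>j. u (gg j))"
  have "A *\<^sub>v x = Matrix.vec k (\<lambda>i. M $ rr i $ f)"
  proof (rule eq_vecI)
    fix i assume "i < dim_vec (Matrix.vec k (\<lambda>i. M $ rr i $ f))"
    then have i: "i < k" by simp
    have "Matrix.vec_index (A *\<^sub>v x) i = (\<Sum>j<k. M $ rr i $ gg j * u (gg j))"
      using i by (simp add: A_def x_def scalar_prod_def lessThan_atLeast0)
    also have "\<dots> = (\<Sum>h\<in>G. M $ rr i $ h * u h)"
      using sum.reindex[of gg "{..<k}" "\<lambda>h. M $ rr i $ h * u h"] gg by (simp add: bij_betw_def)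
    also have "\<dots> = M $ rr i $ f"
      using arg_cong[OF expansion, of "\<lambda>c. c $ rr i"] by (simp add: column_def mult.commute)
    finally show "Matrix.vec_index (A *\<^sub>v x) i = Matrix.vec_index (Matrix.vec k (\<lambda>i. M $ rr i $ f)) i"
      using i by simp
  qed (simp add: A_def)
  then have "replace_col A (A *\<^sub>v x) i0 = Matrix.mat k k (\<lambda>(i, j). M $ rr i $ (gg(i0 := f)) j)"
    unfolding replace_col_def A_def by (intro eq_matI) auto
  then have "Determinant.det (replace_col A (A *\<^sub>v x) i0) \<in> {-1, 0, 1}"
    using TU unfolding totally_unimodular_def subdet_eq_det by metis
  moreover have "Determinant.det (replace_col A (A *\<^sub>v x) i0) = u e * Determinant.det A"
    using cramer_lemma_mat[of A k x i0] i0 by (simp add: A_def x_def)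
  moreover have "Determinant.det A \<in> {-1, 1}"
    using TU det_A unfolding totally_unimodular_def subdet_eq_det A_def by blast
  ultimately show ?thesis by auto
qed

section \<open>Elementary vectors\<close>

definition supp :: "real^'e \<Rightarrow> 'e set" where
  "supp w = {f. w $ f \<noteq> 0}"

definition elementary :: "(real^'e) set \<Rightarrow> real^'e \<Rightarrow> bool" where
  "elementary V c \<longleftrightarrow>
     c \<in> V \<and> c \<noteq> 0 \<and> (\<forall>v\<in>V. v \<noteq> 0 \<longrightarrow> supp v \<subseteq> supp c \<longrightarrow> supp v = supp c)"

lemma elementary_scaleR:
  assumes "subspace V" "elementary V c" "a \<noteq> 0"
  shows "elementary V (a *\<^sub>R c)"
proof -
  have "supp (a *\<^sub>R c) = supp c" using \<open>a \<noteq> 0\<close> by (simp add: supp_def)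
  then show ?thesis using assms by (simp add: elementary_def subspace_scale)
qed

lemma elementary_column_in_span:
  fixes M :: "real^'e^'r"
  assumes c: "elementary (row_space M) c" and "c $ e \<noteq> 0" and "e \<in> G"
    and zeros: "(\<lambda>h. column h M) ` {h. c $ h = 0} \<subseteq> span ((\<lambda>h. column h M) ` G)"
  shows "column f M \<in> span ((\<lambda>h. column h M) ` G)"
proof (rule ccontr)
  let ?S = "span ((\<lambda>h. column h M) ` G)"
  assume f: "column f M \<notin> ?S"
  obtain y z where yz: "y \<in> ?S" "\<And>w. w \<in> ?S \<Longrightarrow> z \<bullet> w = 0" "column f M = y + z"
    using orthogonal_decomposition by metis
  define v where "v = (\<chi> h. z \<bullet> column h M)"
  have v_row: "v \<in> row_space M" unfolding row_space_iff_inner_column v_def by auto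
  have vanish: "v $ h = 0" if "column h M \<in> ?S" for h using yz(2) that by (simp add: v_def)
  have "v $ f = z \<bullet> z" using yz by (simp add: v_def inner_add_right)
  moreover have "z \<noteq> 0" using f yz by auto
  ultimately have "v \<noteq> 0" by force
  moreover have "supp v \<subseteq> supp c" using vanish zeros by (force simp: supp_def)
  ultimately have "supp v = supp c" using c v_row unfolding elementary_def by blast
  moreover have "e \<notin> supp v" using vanish \<open>e \<in> G\<close> by (simp add: supp_def span_base)
  ultimately show False using \<open>c $ e \<noteq> 0\<close> by (simp add: supp_def)
qed

lemma elementary_column_expansion:
  fixes M :: "real^'e^'r"
  assumes c: "elementary (row_space M) c" and ce: "c $ e = 1"
  obtains G u where "e \<in> G" "independent ((\<lambda>h. column h M) ` G)" "inj_on (\<lambda>h. column h M) G"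
    "column f M = (\<Sum>h\<in>G. u h *\<^sub>R column h M)" "c $ f = u e"
proof -
  define col where "col = (\<lambda>h. column h M)"
  define Z where "Z = {h. c $ h = 0}"
  obtain l where l: "\<And>h. c $ h = l \<bullet> col h"
    using c unfolding elementary_def row_space_iff_inner_column col_def by blast
  obtain B where B: "B \<subseteq> Z" "inj_on col B" "independent (col ` B)" "col ` Z \<subseteq> span (col ` B)"
    by (rule independent_image_basis)
  have "col e \<notin> span (col ` Z)"
  proof
    assume "col e \<in> span (col ` Z)"
    then have "real_inner_class.orthogonal l (col e)"
      by (rule orthogonal_to_span) (auto simp: real_inner_class.orthogonal_def Z_def l[symmetric])
    then show False using ce l by (simp add: real_inner_class.orthogonal_def)
  qed
  then have e_new: "col e \<notin> span (col ` B)"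
    using B(1) span_mono[of "col ` B" "col ` Z"] by blast
  define G where "G = insert e B"
  have e_notin: "e \<notin> B" using e_new by (auto intro: span_base)
  have indep: "independent (col ` G)" using e_new B(3) by (simp add: G_def independent_insert)
  have inj: "inj_on col G" using B(2) e_new by (auto simp: G_def intro: span_base)
  have "col ` Z \<subseteq> span (col ` G)"
    using B(4) span_mono[of "col ` B" "col ` G"] by (auto simp: G_def)
  then have "col f \<in> span (col ` G)"
    using elementary_column_in_span[OF c _ _, of e G f] ce by (simp add: col_def Z_def G_def)
  then obtain u where expansion: "col f = (\<Sum>h\<in>G. u h *\<^sub>R col h)"
    using span_image_sum[OF inj] by blast
  have "c $ f = (\<Sum>h\<in>G. u h * (l \<bullet> col h))"
    unfolding l expansion by (simp add: inner_sum_right)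
  also have "\<dots> = u e"
  proof -
    have "(\<Sum>h\<in>B. u h * (l \<bullet> col h)) = 0"
      using B(1) by (intro sum.neutral) (auto simp: Z_def l[symmetric])
    then show ?thesis using e_notin ce by (simp add: G_def l[symmetric])
  qed
  finally show thesis
    using indep inj expansion by (intro that[of G u]) (simp_all add: G_def col_def)
qed

lemma TU_elementary_entries:
  fixes M :: "real^'e^'r"
  assumes TU: "totally_unimodular M" and c: "elementary (row_space M) c" and "c $ e = 1"
  shows "c $ f \<in> {-1, 0, 1}"
proof -
  obtain G u where G: "e \<in> G" "independent ((\<lambda>h. column h M) ` G)" "inj_on (\<lambda>h. column h M) G"
    "column f M = (\<Sum>h\<in>G. u h *\<^sub>R column h M)" and "c $ f = u e"
    using elementary_column_expansion[OF c \<open>c $ e = 1\<close>] .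
  then show ?thesis using TU_column_coefficient[OF TU G(2-4,1)] by simp
qed

section \<open>Conformal decomposition\<close>

definition conformal :: "real^'e \<Rightarrow> real^'e \<Rightarrow> bool" where
  "conformal v w \<longleftrightarrow> (\<forall>f. v $ f = 0 \<or> 0 < v $ f * w $ f)"

lemma conformal_refl: "conformal w w"
  unfolding conformal_def by auto

lemma conformal_trans: "conformal u v \<Longrightarrow> conformal v w \<Longrightarrow> conformal u w"
  unfolding conformal_def by (force simp: zero_less_mult_iff)

lemma conformal_supp_subset: "conformal v w \<Longrightarrow> supp v \<subseteq> supp w"
  unfolding conformal_def supp_def by force

lemma conformal_scaleR: "0 < a \<Longrightarrow> conformal v w \<Longrightarrow> conformal (a *\<^sub>R v) w"
  unfolding conformal_def by (auto simp: mult.assoc zero_less_mult_iff)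

lemma diff_scaled_same_sign:
  fixes a b t :: real
  assumes "0 < t" and le: "b * a \<le> 0 \<or> t \<le> a / b"
  shows "0 \<le> (a - t * b) * a" and "b * a \<le> 0 \<Longrightarrow> a \<noteq> 0 \<Longrightarrow> 0 < (a - t * b) * a"
proof -
  have product: "(a - t * b) * a = a * a - t * (b * a)" by (simp add: algebra_simps)
  show "0 \<le> (a - t * b) * a"
  proof (cases "0 < b * a")
    case True
    then have "t * (b * a) \<le> a / b * (b * a)" using le by (intro mult_right_mono) auto
    also have "\<dots> = a * a" using True by auto
    finally show ?thesis unfolding product by simp
  next
    case False
    then have "t * (b * a) \<le> 0" using \<open>0 < t\<close> by (simp add: mult_nonneg_nonpos)
    moreover have "0 \<le> a * a" by simp
    ultimately show ?thesis unfolding product by linarith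
  qed
  show "0 < (a - t * b) * a" if "b * a \<le> 0" "a \<noteq> 0"
  proof -
    have "0 < a * a" using that(2) not_real_square_gt_zero by blast
    moreover have "t * (b * a) \<le> 0" using that(1) \<open>0 < t\<close> by (simp add: mult_nonneg_nonpos)
    ultimately show ?thesis unfolding product by simp
  qed
qed

text \<open>Moving from y along -v by the smallest ratio y_g/v_g over the coordinates where v and y
  agree in sign kills one coordinate without flipping any sign.\<close>
lemma conformal_reduction:
  fixes y v :: "real^'e"
  assumes pos: "\<exists>g. 0 < v $ g * y $ g" and sub: "supp v \<subseteq> supp y"
  obtains t where "conformal (y - t *\<^sub>R v) y" "supp (y - t *\<^sub>R v) \<subset> supp y"
    "\<And>g. v $ g * y $ g \<le> 0 \<Longrightarrow> y $ g \<noteq> 0 \<Longrightarrow> (y - t *\<^sub>R v) $ g \<noteq> 0"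
proof -
  define R where "R = (\<lambda>g. y $ g / v $ g) ` {g. 0 < v $ g * y $ g}"
  have R: "finite R" "R \<noteq> {}" using pos unfolding R_def by auto
  define t where "t = Min R"
  obtain g0 where g0: "0 < v $ g0 * y $ g0" "t = y $ g0 / v $ g0"
    using Min_in[OF R] unfolding t_def R_def by auto
  have "0 < t" using g0 by (auto simp: zero_less_mult_iff zero_less_divide_iff)
  have ratio: "v $ g * y $ g \<le> 0 \<or> t \<le> y $ g / v $ g" for g
    using R unfolding t_def R_def by (auto intro!: Min_le)
  note signs = diff_scaled_same_sign[OF \<open>0 < t\<close> ratio]
  have "conformal (y - t *\<^sub>R v) y"
    unfolding conformal_def
  proof
    fix g
    have "y $ g = 0 \<Longrightarrow> v $ g = 0" using sub by (auto simp: supp_def)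
    then show "(y - t *\<^sub>R v) $ g = 0 \<or> 0 < (y - t *\<^sub>R v) $ g * y $ g"
      using signs(1)[of g] by (cases "y $ g = 0") (auto simp: less_le)
  qed
  moreover have "g0 \<in> supp y - supp (y - t *\<^sub>R v)" using g0 by (auto simp: supp_def)
  moreover have "(y - t *\<^sub>R v) $ g \<noteq> 0" if "v $ g * y $ g \<le> 0" "y $ g \<noteq> 0" for g
    using signs(2)[OF that] by auto
  ultimately show thesis using that conformal_supp_subset by blast
qed

lemma uminus_conformal_if_no_agreement:
  assumes "supp w \<subseteq> supp y" "\<not> (\<exists>g. 0 < w $ g * y $ g)"
  shows "conformal (-w) y"
  unfolding conformal_def
proof
  fix g
  show "(-w) $ g = 0 \<or> 0 < (-w) $ g * y $ g"
  proof (cases "w $ g = 0")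
    case False
    then have "w $ g * y $ g \<noteq> 0" using assms(1) by (auto simp: supp_def)
    then have "w $ g * y $ g < 0" using assms(2) by (meson linorder_neqE_linordered_idom)
    then show ?thesis by simp
  qed simp
qed

text \<open>Choose w = \<plusminus>v so that subtracting positive multiples of w cannot cancel the e-th
  coordinate of y, and, if v vanishes at e, so that w and y agree in sign somewhere.\<close>
lemma exists_opposing_sign:
  assumes "v \<noteq> 0" "supp v \<subseteq> supp y"
  obtains w where "w = v \<or> w = -v" "w $ e * y $ e \<le> 0" "v $ e = 0 \<Longrightarrow> \<exists>g. 0 < w $ g * y $ g"
proof (cases "v $ e = 0")
  case True
  obtain g where "v $ g \<noteq> 0" using exists_vec_nth_nonzero \<open>v \<noteq> 0\<close> by blast
  moreover have "y $ g \<noteq> 0" using assms(2) calculation by (auto simp: supp_def)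
  ultimately consider "0 < v $ g * y $ g" | "0 < (-v) $ g * y $ g"
    by (auto simp: zero_less_mult_iff mult_less_0_iff linorder_neq_iff)
  then show thesis
  proof cases
    case 1
    then show thesis using that[of v] True by auto
  next
    case 2
    then show thesis using that[of "-v"] True by auto
  qed
next
  case ve: False
  show thesis
  proof (cases "v $ e * y $ e \<le> 0")
    case True
    then show thesis using that[of v] ve by auto
  next
    case False
    then show thesis using that[of "-v"] ve by auto
  qed
qed

lemma conformal_smaller_support:
  fixes y v :: "real^'e"
  assumes V: "subspace V" and "y \<in> V" "v \<in> V" "v \<noteq> 0"
    and sub: "supp v \<subset> supp y" and ye: "y $ e \<noteq> 0"
  obtains y' where "y' \<in> V" "conformal y' y" "y' $ e \<noteq> 0" "supp y' \<subset> supp y"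
proof -
  obtain w where w: "w = v \<or> w = -v" "w $ e * y $ e \<le> 0" "v $ e = 0 \<Longrightarrow> \<exists>g. 0 < w $ g * y $ g"
    using exists_opposing_sign[OF \<open>v \<noteq> 0\<close>] sub by blast
  have wV: "w \<in> V" using w(1) \<open>v \<in> V\<close> V by (auto simp: subspace_neg)
  have "supp w \<subseteq> supp y" using w(1) sub by (auto simp: supp_def)
  show thesis
  proof (cases "\<exists>g. 0 < w $ g * y $ g")
    case True
    then obtain t where t: "conformal (y - t *\<^sub>R w) y" "supp (y - t *\<^sub>R w) \<subset> supp y"
      "\<And>g. w $ g * y $ g \<le> 0 \<Longrightarrow> y $ g \<noteq> 0 \<Longrightarrow> (y - t *\<^sub>R w) $ g \<noteq> 0"
      using \<open>supp w \<subseteq> supp y\<close> by (rule conformal_reduction) fast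
    moreover have "y - t *\<^sub>R w \<in> V" using V \<open>y \<in> V\<close> wV by (simp add: subspace_diff subspace_scale)
    ultimately show thesis using that w(2) ye by blast
  next
    case False
    then have "conformal (-w) y" "(-w) $ e \<noteq> 0"
      using uminus_conformal_if_no_agreement[OF \<open>supp w \<subseteq> supp y\<close>] w by auto
    moreover have "supp (-w) = supp v" using w(1) by (auto simp: supp_def)
    ultimately show thesis using that[of "-w"] sub wV V by (simp add: subspace_neg)
  qed
qed

lemma exists_conformal_elementary:
  fixes y :: "real^'e"
  assumes V: "subspace V" and "y \<in> V" "y $ e \<noteq> 0"
  obtains c where "elementary V c" "conformal c y" "c $ e \<noteq> 0"
  using assms(2,3)
proof (induction "card (supp y)" arbitrary: y thesis rule: less_induct)
  case less
  show ?case
  proof (cases "elementary V y")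
    case True
    then show ?thesis using less.prems conformal_refl by blast
  next
    case False
    then obtain v where "v \<in> V" "v \<noteq> 0" "supp v \<subset> supp y"
      using less.prems(2,3) by (auto simp: elementary_def)
    then obtain y' where y': "y' \<in> V" "conformal y' y" "y' $ e \<noteq> 0" "supp y' \<subset> supp y"
      by (rule conformal_smaller_support[OF V \<open>y \<in> V\<close> _ _ _ less.prems(3)])
    have "card (supp y') < card (supp y)" using y'(4) by (simp add: psubset_card_mono)
    then obtain c where "elementary V c" "conformal c y'" "c $ e \<noteq> 0"
      using less.hyps y'(1,3) by blast
    then show ?thesis using less.prems(1) y'(2) conformal_trans by blast
  qed
qed

lemma TU_conformal_unit_vector:
  fixes M :: "real^'e^'r"
  assumes TU: "totally_unimodular M" and "y \<in> row_space M" "y $ e \<noteq> 0"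
  obtains u where "u \<in> row_space M" "\<forall>f. u $ f \<in> {-1, 0, 1}" "conformal u y" "u $ e = sgn (y $ e)"
proof -
  obtain c where c: "elementary (row_space M) c" "conformal c y" "c $ e \<noteq> 0"
    using exists_conformal_elementary[OF subspace_row_space assms(2,3)] .
  define u where "u = (1 / \<bar>c $ e\<bar>) *\<^sub>R c"
  have "elementary (row_space M) ((1 / c $ e) *\<^sub>R c)"
    using elementary_scaleR[OF subspace_row_space c(1)] c(3) by simp
  then have unit: "(1 / c $ e) * c $ f \<in> {-1, 0, 1}" for f
    using TU_elementary_entries[OF TU, of "(1 / c $ e) *\<^sub>R c" e f] c(3) by simp
  have "u $ f \<in> {-1, 0, 1}" for f
  proof -
    have "u $ f = sgn (c $ e) * ((1 / c $ e) * c $ f)"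
      using c(3) by (simp add: u_def sgn_if)
    moreover have "sgn (c $ e) \<in> {-1, 1}" using c(3) by (simp add: sgn_if)
    ultimately show ?thesis using unit[of f] by (elim insertE) auto
  qed
  moreover have "u \<in> row_space M"
    using c(1) by (simp add: u_def elementary_def subspace_scale[OF subspace_row_space])
  moreover have "conformal u y"
    unfolding u_def using c(2,3) by (simp add: conformal_scaleR)
  moreover have "u $ e = sgn (y $ e)"
    using c(2,3) by (auto simp: u_def conformal_def sgn_if zero_less_mult_iff)
  ultimately show thesis using that by blast
qed

definition l1_norm :: "real^'e \<Rightarrow> real" where
  "l1_norm w = (\<Sum>f\<in>UNIV. \<bar>w $ f\<bar>)"

lemma l1_norm_zero [simp]: "l1_norm 0 = 0"
  by (simp add: l1_norm_def)

lemma abs_diff_conformal: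
  assumes "conformal v w" "0 \<le> t" "t * \<bar>v $ f\<bar> \<le> \<bar>w $ f\<bar>"
  shows "\<bar>(w - t *\<^sub>R v) $ f\<bar> = \<bar>w $ f\<bar> - t * \<bar>v $ f\<bar>"
proof (cases "v $ f = 0")
  case False
  then have "0 < v $ f * w $ f" using assms(1) unfolding conformal_def by blast
  then show ?thesis using assms(2,3)
    by (cases "0 < v $ f") (auto simp: zero_less_mult_iff abs_if mult_less_0_iff)
qed simp

lemma l1_norm_diff_conformal:
  assumes "conformal v w" "0 \<le> t" "\<And>f. t * \<bar>v $ f\<bar> \<le> \<bar>w $ f\<bar>"
  shows "l1_norm (w - t *\<^sub>R v) = l1_norm w - t * l1_norm v"
  unfolding l1_norm_def abs_diff_conformal[OF assms] by (simp add: sum_subtractf sum_distrib_left)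

lemma TU_peel_unit_vector:
  fixes M :: "real^'e^'r"
  assumes TU: "totally_unimodular M" and "w \<in> row_space M" "w \<noteq> 0"
  obtains u lam where "u \<in> row_space M" "\<forall>f. u $ f \<in> {-1, 0, 1}" "0 < lam"
    "supp (w - lam *\<^sub>R u) \<subset> supp w" "l1_norm w = l1_norm (w - lam *\<^sub>R u) + lam * l1_norm u"
proof -
  obtain e where e: "w $ e \<noteq> 0" using exists_vec_nth_nonzero \<open>w \<noteq> 0\<close> by blast
  obtain u where u: "u \<in> row_space M" "\<forall>f. u $ f \<in> {-1, 0, 1}" "conformal u w" "u $ e = sgn (w $ e)"
    using TU_conformal_unit_vector[OF TU \<open>w \<in> row_space M\<close> e] .
  have "e \<in> supp u" using u(4) e by (simp add: supp_def sgn_if)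
  then have S: "finite ((\<lambda>f. \<bar>w $ f\<bar>) ` supp u)" "(\<lambda>f. \<bar>w $ f\<bar>) ` supp u \<noteq> {}" by auto
  define lam where "lam = Min ((\<lambda>f. \<bar>w $ f\<bar>) ` supp u)"
  obtain f0 where f0: "f0 \<in> supp u" "lam = \<bar>w $ f0\<bar>"
    using Min_in[OF S] unfolding lam_def by auto
  have abs_u: "\<bar>u $ f\<bar> = 1" if "f \<in> supp u" for f
  proof -
    have "u $ f \<in> {-1, 0, 1}" using u(2) by blast
    then show ?thesis using that by (auto simp: supp_def)
  qed
  have "0 < lam" using f0 conformal_supp_subset[OF u(3)] by (auto simp: supp_def)
  have "lam * \<bar>u $ f\<bar> \<le> \<bar>w $ f\<bar>" for f
  proof (cases "f \<in> supp u")
    case True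
    then show ?thesis unfolding lam_def using S abs_u by (auto intro!: Min_le)
  qed (simp add: supp_def)
  note coord = abs_diff_conformal[OF u(3) less_imp_le[OF \<open>0 < lam\<close>] this]
  have "(w - lam *\<^sub>R u) $ f0 = 0" using coord[of f0] f0 abs_u by simp
  then have "f0 \<in> supp w - supp (w - lam *\<^sub>R u)"
    using f0 conformal_supp_subset[OF u(3)] by (auto simp: supp_def)
  moreover have "supp (w - lam *\<^sub>R u) \<subseteq> supp w"
    using conformal_supp_subset[OF u(3)] by (auto simp: supp_def)
  moreover have "l1_norm w = l1_norm (w - lam *\<^sub>R u) + lam * l1_norm u"
    using l1_norm_diff_conformal[OF u(3) less_imp_le[OF \<open>0 < lam\<close>]
        \<open>\<And>f. lam * \<bar>u $ f\<bar> \<le> \<bar>w $ f\<bar>\<close>]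
    by simp
  ultimately show thesis using that u(1,2) \<open>0 < lam\<close> by blast
qed

lemma TU_l1_bound_from_units:
  fixes M :: "real^'e^'r"
  assumes TU: "totally_unimodular M"
    and units: "\<And>u. u \<in> row_space M \<Longrightarrow> \<forall>f. u $ f \<in> {-1, 0, 1} \<Longrightarrow>
      2 * (x \<bullet> u) \<le> l1_norm u"
  shows "w \<in> row_space M \<Longrightarrow> 2 * (x \<bullet> w) \<le> l1_norm w"
proof (induction "card (supp w)" arbitrary: w rule: less_induct)
  case less
  show ?case
  proof (cases "w = 0")
    case False
    then obtain u lam where u: "u \<in> row_space M" "\<forall>f. u $ f \<in> {-1, 0, 1}" "0 < lam"
      and smaller: "supp (w - lam *\<^sub>R u) \<subset> supp w"
      and l1: "l1_norm w = l1_norm (w - lam *\<^sub>R u) + lam * l1_norm u"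
      using TU_peel_unit_vector[OF TU less.prems] by metis
    have "w - lam *\<^sub>R u \<in> row_space M"
      using less.prems u(1) by (simp add: subspace_diff subspace_scale subspace_row_space)
    then have "2 * (x \<bullet> (w - lam *\<^sub>R u)) \<le> l1_norm (w - lam *\<^sub>R u)"
      using less.hyps smaller by (simp add: psubset_card_mono)
    moreover have "lam * (2 * (x \<bullet> u)) \<le> lam * l1_norm u"
      using units[OF u(1,2)] \<open>0 < lam\<close> by simp
    ultimately show ?thesis using l1 by (simp add: inner_diff_right algebra_simps)
  qed simp
qed

section \<open>The Voronoi cell\<close>

lemma norm_le_norm_diff_iff: "norm x \<le> norm (x - \<mu>) \<longleftrightarrow> 2 * (x \<bullet> \<mu>) \<le> \<mu> \<bullet> \<mu>"
  by (simp add: norm_le inner_diff_left inner_diff_right inner_commute)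

lemma inner_vec_eq_sum: "(x::real^'e) \<bullet> y = (\<Sum>f\<in>UNIV. x $ f * y $ f)"
  by (simp add: inner_vec_def)

lemma inner_self_unit_vector: "\<forall>f. u $ f \<in> {-1, 0, 1} \<Longrightarrow> u \<bullet> u = l1_norm u"
  unfolding inner_vec_eq_sum l1_norm_def
proof (intro sum.cong refl)
  fix f
  assume "\<forall>f. u $ f \<in> {-1, 0, 1}"
  then have "u $ f \<in> {-1, 0, 1}" ..
  then show "u $ f * u $ f = \<bar>u $ f\<bar>" by auto
qed

lemma abs_le_square_of_int: "r \<in> \<int> \<Longrightarrow> \<bar>r\<bar> \<le> r * (r::real)"
proof (elim Ints_cases)
  fix n :: int
  assume r: "r = of_int n"
  have "\<bar>n\<bar> \<le> n * n"
  proof (cases "n = 0")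
    case False
    then have "\<bar>n\<bar> * 1 \<le> \<bar>n\<bar> * \<bar>n\<bar>" by (intro mult_left_mono) auto
    then show ?thesis by simp
  qed simp
  then have "real_of_int \<bar>n\<bar> \<le> of_int (n * n)" by linarith
  then show ?thesis using r by simp
qed

lemma l1_norm_le_inner_self: "\<mu> \<in> integer_vectors \<Longrightarrow> l1_norm \<mu> \<le> \<mu> \<bullet> \<mu>"
  unfolding integer_vectors_def inner_vec_eq_sum l1_norm_def
  by (intro sum_mono) (simp add: abs_le_square_of_int)

lemma unit_vector_in_cut_lattice:
  assumes "u \<in> row_space M" "\<forall>f. u $ f \<in> {-1, 0, 1}"
  shows "u \<in> cut_lattice M"
proof -
  have "u $ f \<in> \<int>" for f
    using assms(2)[rule_format, of f] by (auto intro: Ints_minus)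
  then show ?thesis using assms(1) by (simp add: cut_lattice_def integer_vectors_def)
qed

text \<open>The Voronoi cell is cut out by the l1 inequalities of Row(M): for the lattice vectors these are
  weaker than the defining inequalities, and for the 0/\<plusminus>1 vectors they coincide with them.\<close>
lemma voronoi_cell_iff:
  fixes M :: "real^'e^'r"
  assumes TU: "totally_unimodular M"
  shows "x \<in> voronoi_cell M \<longleftrightarrow>
    x \<in> row_space M \<and> (\<forall>w\<in>row_space M. 2 * (x \<bullet> w) \<le> l1_norm w)"
proof
  assume x: "x \<in> voronoi_cell M"
  have "2 * (x \<bullet> u) \<le> l1_norm u" if "u \<in> row_space M" "\<forall>f. u $ f \<in> {-1, 0, 1}" for u
    using x unit_vector_in_cut_lattice[OF that] inner_self_unit_vector[OF that(2)]
    by (auto simp: voronoi_cell_def norm_le_norm_diff_iff)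
  then show "x \<in> row_space M \<and> (\<forall>w\<in>row_space M. 2 * (x \<bullet> w) \<le> l1_norm w)"
    using x TU_l1_bound_from_units[OF TU] by (auto simp: voronoi_cell_def)
next
  assume x: "x \<in> row_space M \<and> (\<forall>w\<in>row_space M. 2 * (x \<bullet> w) \<le> l1_norm w)"
  have "norm x \<le> norm (x - \<mu>)" if "\<mu> \<in> cut_lattice M" for \<mu>
    using x that l1_norm_le_inner_self[of \<mu>]
    by (fastforce simp: norm_le_norm_diff_iff cut_lattice_def)
  then show "x \<in> voronoi_cell M" using x by (simp add: voronoi_cell_def)
qed

lemma finite_vectors_with_entries: "finite A \<Longrightarrow> finite {u::'a^'n. \<forall>f. u $ f \<in> A}"
proof -
  assume "finite A"
  have "{u::'a^'n. \<forall>f. u $ f \<in> A} \<subseteq> vec_lambda ` PiE UNIV (\<lambda>_. A)"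
  proof
    fix u :: "'a^'n"
    assume "u \<in> {u. \<forall>f. u $ f \<in> A}"
    then have "vec_nth u \<in> PiE UNIV (\<lambda>_. A)" by auto
    then show "u \<in> vec_lambda ` PiE UNIV (\<lambda>_. A)" by (metis image_eqI vec_nth_inverse)
  qed
  then show ?thesis by (rule finite_subset) (simp add: finite_PiE \<open>finite A\<close>)
qed

lemma polyhedron_voronoi_cell:
  fixes M :: "real^'e^'r"
  assumes TU: "totally_unimodular M"
  shows "polyhedron (voronoi_cell M)"
proof -
  define U where "U = {u \<in> row_space M. \<forall>f. u $ f \<in> {-1, 0, 1}}"
  have "x \<in> voronoi_cell M \<longleftrightarrow>
      x \<in> row_space M \<inter> \<Inter>((\<lambda>u. {x. u \<bullet> x \<le> l1_norm u / 2}) ` U)" for x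
  proof -
    have "(\<forall>w\<in>row_space M. 2 * (x \<bullet> w) \<le> l1_norm w) \<longleftrightarrow>
        (\<forall>u\<in>U. 2 * (x \<bullet> u) \<le> l1_norm u)"
      using TU_l1_bound_from_units[OF TU] by (auto simp: U_def)
    then show ?thesis unfolding voronoi_cell_iff[OF TU] by (auto simp: inner_commute mult.commute)
  qed
  then have "voronoi_cell M = row_space M \<inter> \<Inter>((\<lambda>u. {x. u \<bullet> x \<le> l1_norm u / 2}) ` U)"
    by blast
  moreover have "finite U"
    unfolding U_def by (rule finite_subset[OF _ finite_vectors_with_entries[of "{-1, 0, 1::real}"]]) auto
  then have "polyhedron (\<Inter>((\<lambda>u. {x. u \<bullet> x \<le> l1_norm u / 2}) ` U))"
    by (intro polyhedron_Inter) (simp, blast intro: polyhedron_halfspace_le)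
  moreover have "polyhedron (row_space M)"
    by (rule affine_imp_polyhedron[OF subspace_imp_affine[OF subspace_row_space]])
  ultimately show ?thesis by (simp add: polyhedron_Int)
qed

section \<open>Faces of the Voronoi cell\<close>

text \<open>The orthogonal projection onto Row(M) of the vector with entries sgn(w f)/2 is a point of the
  Voronoi cell on the supporting hyperplane of the l1 inequality of w.\<close>
lemma voronoi_cell_tight_point:
  fixes M :: "real^'e^'r"
  assumes TU: "totally_unimodular M" and "w \<in> row_space M"
  obtains p where "p \<in> voronoi_cell M"
    "\<And>v. v \<in> row_space M \<Longrightarrow> 2 * (v \<bullet> p) = (\<Sum>f\<in>UNIV. v $ f * sgn (w $ f))"
    "2 * (w \<bullet> p) = l1_norm w"
proof -
  define y :: "real^'e" where "y = (\<chi> f. sgn (w $ f) / 2)"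
  obtain p z where pz: "p \<in> row_space M" "\<And>v. v \<in> row_space M \<Longrightarrow> z \<bullet> v = 0" "y = p + z"
    using orthogonal_decomposition[of "row_space M" y] by auto
  have p: "2 * (v \<bullet> p) = (\<Sum>f\<in>UNIV. v $ f * sgn (w $ f))" if "v \<in> row_space M" for v
  proof -
    have "v \<bullet> p = v \<bullet> y" using pz(2)[OF that] pz(3) by (simp add: inner_add_right inner_commute)
    also have "\<dots> = (\<Sum>f\<in>UNIV. v $ f * sgn (w $ f)) / 2"
      by (simp add: inner_vec_eq_sum y_def sum_divide_distrib)
    finally show ?thesis by simp
  qed
  have "p \<in> voronoi_cell M"
    unfolding voronoi_cell_iff[OF TU]
  proof (intro conjI ballI pz(1))
    fix v assume "v \<in> row_space M"
    have "(\<Sum>f\<in>UNIV. v $ f * sgn (w $ f)) \<le> l1_norm v"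
      unfolding l1_norm_def by (intro sum_mono) (auto simp: sgn_if)
    then show "2 * (p \<bullet> v) \<le> l1_norm v" using p[OF \<open>v \<in> row_space M\<close>] by (simp add: inner_commute)
  qed
  moreover have "2 * (w \<bullet> p) = l1_norm w"
    using p[OF \<open>w \<in> row_space M\<close>] by (simp add: l1_norm_def abs_sgn)
  ultimately show thesis using that p by blast
qed

definition voronoi_face :: "real^'e^'r \<Rightarrow> real^'e \<Rightarrow> (real^'e) set" where
  "voronoi_face M w = voronoi_cell M \<inter> {x. w \<bullet> x = l1_norm w / 2}"

lemma voronoi_face_in_face_poset:
  fixes M :: "real^'e^'r"
  assumes TU: "totally_unimodular M" and "w \<in> row_space M"
  shows "voronoi_face M w \<in> face_poset M"
proof -
  have "convex (voronoi_cell M)" using polyhedron_voronoi_cell[OF TU] polyhedron_imp_convex by blast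
  moreover have "w \<bullet> x \<le> l1_norm w / 2" if "x \<in> voronoi_cell M" for x
    using that \<open>w \<in> row_space M\<close> unfolding voronoi_cell_iff[OF TU] by (auto simp: inner_commute)
  ultimately have "voronoi_face M w face_of voronoi_cell M"
    unfolding voronoi_face_def by (rule face_of_Int_supporting_hyperplane_le)
  moreover obtain p where "p \<in> voronoi_cell M" "2 * (w \<bullet> p) = l1_norm w"
    using voronoi_cell_tight_point[OF TU \<open>w \<in> row_space M\<close>] by metis
  then have "voronoi_face M w \<noteq> {}" unfolding voronoi_face_def by auto
  ultimately show ?thesis by (simp add: face_poset_def)
qed

text \<open>Faces of a polyhedron are exposed; the exposing functional may be projected onto Row(M), and
  then the supporting value is forced to be the l1 bound by the point of the previous lemma.\<close>
lemma face_poset_eq_voronoi_face: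
  fixes M :: "real^'e^'r"
  assumes TU: "totally_unimodular M" and "F \<in> face_poset M"
  obtains w where "w \<in> row_space M" "F = voronoi_face M w"
proof -
  have "F exposed_face_of voronoi_cell M" "F \<noteq> {}"
    using assms exposed_face_of_polyhedron[OF polyhedron_voronoi_cell[OF TU]] by (auto simp: face_poset_def)
  then obtain a b where ab: "voronoi_cell M \<subseteq> {x. a \<bullet> x \<le> b}" "F = voronoi_cell M \<inter> {x. a \<bullet> x = b}"
    unfolding exposed_face_of_def by blast
  obtain w q where wq: "w \<in> row_space M" "\<And>v. v \<in> row_space M \<Longrightarrow> q \<bullet> v = 0" "a = w + q"
    using orthogonal_decomposition[of "row_space M" a] by auto
  have a_w: "a \<bullet> x = w \<bullet> x" if "x \<in> voronoi_cell M" for x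
    using that wq(2)[of x] wq(3) by (simp add: voronoi_cell_def inner_add_left)
  obtain x1 where "x1 \<in> F" using \<open>F \<noteq> {}\<close> by auto
  then have x1: "x1 \<in> voronoi_cell M" "a \<bullet> x1 = b" using ab(2) by auto
  then have "2 * (x1 \<bullet> w) \<le> l1_norm w" using wq(1) voronoi_cell_iff[OF TU] by blast
  then have "b \<le> l1_norm w / 2" using x1 a_w by (simp add: inner_commute)
  moreover obtain p where "p \<in> voronoi_cell M" "2 * (w \<bullet> p) = l1_norm w"
    using voronoi_cell_tight_point[OF TU wq(1)] by metis
  then have "l1_norm w / 2 \<le> b" using ab(1) a_w by force
  ultimately have "F = voronoi_face M w"
    unfolding ab(2) voronoi_face_def using a_w by auto
  then show thesis using that wq(1) by blast
qed

lemma abs_eq_mult_sgn_iff: "\<bar>a\<bar> = a * sgn b \<longleftrightarrow> a = 0 \<or> 0 < a * (b::real)"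
  by (cases "0 < a"; cases "0 < b"; cases "b = 0") (auto simp: sgn_if zero_less_mult_iff)

lemma voronoi_face_subset_imp_conformal:
  fixes M :: "real^'e^'r"
  assumes TU: "totally_unimodular M" and "w \<in> row_space M" "w' \<in> row_space M"
    and sub: "voronoi_face M w \<subseteq> voronoi_face M w'"
  shows "conformal w' w"
proof -
  obtain p where p: "p \<in> voronoi_cell M"
    "\<And>v. v \<in> row_space M \<Longrightarrow> 2 * (v \<bullet> p) = (\<Sum>f\<in>UNIV. v $ f * sgn (w $ f))"
    "2 * (w \<bullet> p) = l1_norm w"
    using voronoi_cell_tight_point[OF TU \<open>w \<in> row_space M\<close>] by metis
  then have "p \<in> voronoi_face M w'" using sub by (auto simp: voronoi_face_def)
  then have "(\<Sum>f\<in>UNIV. w' $ f * sgn (w $ f)) = (\<Sum>f\<in>UNIV. \<bar>w' $ f\<bar>)"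
    using p(2)[OF \<open>w' \<in> row_space M\<close>] by (simp add: voronoi_face_def l1_norm_def)
  then have "(\<Sum>f\<in>UNIV. \<bar>w' $ f\<bar> - w' $ f * sgn (w $ f)) = 0"
    by (simp add: sum_subtractf)
  moreover have "w' $ f * sgn (w $ f) \<le> \<bar>w' $ f\<bar>" for f by (auto simp: sgn_if)
  ultimately have "\<bar>w' $ f\<bar> = w' $ f * sgn (w $ f)" for f
    using sum_nonneg_eq_0_iff[of UNIV "\<lambda>f. \<bar>w' $ f\<bar> - w' $ f * sgn (w $ f)"] by simp
  then show ?thesis unfolding conformal_def abs_eq_mult_sgn_iff by blast
qed

text \<open>Subtracting the largest multiple s of w' keeping w - s w' conformal to w splits the l1 inequality
  of w into those of w - s w' and of w'; equality in the former forces equality in both.\<close>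
lemma conformal_imp_voronoi_face_subset:
  fixes M :: "real^'e^'r"
  assumes TU: "totally_unimodular M" and "w \<in> row_space M" "w' \<in> row_space M"
    and conf: "conformal w' w"
  shows "voronoi_face M w \<subseteq> voronoi_face M w'"
proof (cases "w' = 0")
  case False
  then obtain f1 where "f1 \<in> supp w'" using exists_vec_nth_nonzero by (auto simp: supp_def)
  then have S: "finite ((\<lambda>f. \<bar>w $ f\<bar> / \<bar>w' $ f\<bar>) ` supp w')"
    "(\<lambda>f. \<bar>w $ f\<bar> / \<bar>w' $ f\<bar>) ` supp w' \<noteq> {}"
    by auto
  define s where "s = Min ((\<lambda>f. \<bar>w $ f\<bar> / \<bar>w' $ f\<bar>) ` supp w')"
  obtain f0 where f0: "f0 \<in> supp w'" "s = \<bar>w $ f0\<bar> / \<bar>w' $ f0\<bar>"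
    using Min_in[OF S] unfolding s_def by auto
  have "w $ f0 \<noteq> 0" using f0(1) conformal_supp_subset[OF conf] by (auto simp: supp_def)
  then have "0 < s" using f0 by (simp add: supp_def)
  have "s * \<bar>w' $ f\<bar> \<le> \<bar>w $ f\<bar>" for f
  proof (cases "f \<in> supp w'")
    case True
    then have "s \<le> \<bar>w $ f\<bar> / \<bar>w' $ f\<bar>" unfolding s_def using S by (auto intro!: Min_le)
    then show ?thesis using True by (simp add: supp_def pos_le_divide_eq)
  qed (simp add: supp_def)
  then have l1: "l1_norm (w - s *\<^sub>R w') = l1_norm w - s * l1_norm w'"
    using l1_norm_diff_conformal[OF conf] \<open>0 < s\<close> by simp
  have diff_row: "w - s *\<^sub>R w' \<in> row_space M"
    using assms(2,3) by (simp add: subspace_diff subspace_scale subspace_row_space)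
  show ?thesis
  proof
    fix x
    assume "x \<in> voronoi_face M w"
    then have x: "x \<in> voronoi_cell M" "2 * (x \<bullet> w) = l1_norm w"
      by (auto simp: voronoi_face_def inner_commute)
    have "2 * (x \<bullet> (w - s *\<^sub>R w')) \<le> l1_norm (w - s *\<^sub>R w')"
      using x(1) diff_row voronoi_cell_iff[OF TU] by blast
    then have "s * l1_norm w' \<le> s * (2 * (x \<bullet> w'))"
      using x(2) l1 by (simp add: inner_diff_right algebra_simps)
    then have "l1_norm w' \<le> 2 * (x \<bullet> w')" using \<open>0 < s\<close> by simp
    moreover have "2 * (x \<bullet> w') \<le> l1_norm w'"
      using x(1) \<open>w' \<in> row_space M\<close> voronoi_cell_iff[OF TU] by blast
    ultimately show "x \<in> voronoi_face M w'"
      using x(1) by (simp add: voronoi_face_def inner_commute)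
  qed
qed (simp add: voronoi_face_def)

section \<open>Coherent acyclic orientations\<close>

definition sgn_int :: "real \<Rightarrow> int" where
  "sgn_int r = (if 0 < r then 1 else if r < 0 then -1 else 0)"

lemma of_int_sgn_int [simp]: "real_of_int (sgn_int r) = sgn r"
  by (simp add: sgn_int_def sgn_if)

definition sign_pattern :: "real^'e \<Rightarrow> 'e set \<times> ('e \<Rightarrow> int)" where
  "sign_pattern w = (supp w, \<lambda>f. sgn_int (w $ f))"

lemma sgn_int_agree_iff:
  "(a \<noteq> 0 \<longrightarrow> b \<noteq> 0 \<and> sgn_int a = sgn_int b) \<longleftrightarrow> a = 0 \<or> 0 < a * (b::real)"
  by (cases "0 < a"; cases "a < 0"; cases "0 < b"; cases "b < 0")
    (auto simp: sgn_int_def zero_less_mult_iff)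

lemma cac_le_sign_pattern_iff: "cac_le (sign_pattern w) (sign_pattern w') \<longleftrightarrow> conformal w' w"
proof -
  have "cac_le (sign_pattern w) (sign_pattern w') \<longleftrightarrow>
      (\<forall>f. w' $ f \<noteq> 0 \<longrightarrow> w $ f \<noteq> 0 \<and> sgn_int (w' $ f) = sgn_int (w $ f))"
    by (auto simp: cac_le_def sign_pattern_def supp_def)
  then show ?thesis unfolding conformal_def sgn_int_agree_iff .
qed

lemma oriented_sub_sign_pattern: "oriented_sub (sign_pattern w)"
  unfolding oriented_sub_def sign_pattern_def supp_def by (auto simp: sgn_int_def)

lemma cac_le_antisym:
  assumes "oriented_sub Se" "oriented_sub Se'" "cac_le Se Se'" "cac_le Se' Se"
  shows "Se = Se'"
proof -
  have "fst Se = fst Se'" using assms(3,4) by (auto simp: cac_le_def)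
  moreover have "snd Se f = snd Se' f" for f
    using assms calculation by (cases "f \<in> fst Se") (auto simp: oriented_sub_def cac_le_def)
  ultimately show ?thesis by (simp add: prod_eq_iff fun_eq_iff)
qed

abbreviation reorientation :: "'e set \<Rightarrow> ('e \<Rightarrow> int) \<Rightarrow> 'e \<Rightarrow> real" where
  "reorientation S \<epsilon> f \<equiv> if f \<in> S then of_int (\<epsilon> f) else 1"

lemma row_space_reorient:
  assumes "u \<in> row_space M"
  shows "(\<chi> f. reorientation S \<epsilon> f * u $ f) \<in> row_space (reorient M S \<epsilon>)"
proof -
  obtain c where c: "\<forall>f. u $ f = (\<Sum>r\<in>UNIV. c $ r * M $ r $ f)"
    using assms unfolding row_space_def by blast
  show ?thesis
    unfolding row_space_def reorient_def
    by (intro CollectI exI[of _ c] allI) (simp add: c sum_distrib_left algebra_simps)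
qed

lemma reorient_reorient:
  assumes "oriented_sub (S, \<epsilon>)"
  shows "reorient (reorient M S \<epsilon>) S \<epsilon> = M"
proof -
  have "reorientation S \<epsilon> f * reorientation S \<epsilon> f = 1" for f
    using assms by (auto simp: oriented_sub_def)
  then show ?thesis
    unfolding reorient_def by (simp add: Finite_Cartesian_Product.vec_eq_iff mult.assoc[symmetric])
qed

lemma abs_conformal_in_reoriented_row_space:
  assumes "u \<in> row_space M" "conformal u w"
  shows "(\<chi> f. \<bar>u $ f\<bar>) \<in> row_space (reorient M (supp w) (\<lambda>f. sgn_int (w $ f)))"
proof -
  have "reorientation (supp w) (\<lambda>f. sgn_int (w $ f)) f * u $ f = \<bar>u $ f\<bar>" for f
  proof (cases "f \<in> supp w")
    case True
    have "u $ f = 0 \<or> 0 < u $ f * w $ f" using assms(2) by (simp add: conformal_def)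
    then show ?thesis using True abs_eq_mult_sgn_iff[of "u $ f" "w $ f"] by (simp add: mult.commute)
  next
    case False
    then have "u $ f = 0" using conformal_supp_subset[OF assms(2)] by (auto simp: supp_def)
    then show ?thesis by simp
  qed
  then show ?thesis using row_space_reorient[OF assms(1), of "supp w" "\<lambda>f. sgn_int (w $ f)"] by simp
qed

text \<open>The witness for e is the 0/\<plusminus>1 vector u of Row(M) conformal to w through e, reoriented
  by the signs of w: this makes it the 0/1 vector e + z with z supported in supp w.\<close>
lemma sign_pattern_in_CAC:
  fixes M :: "real^'e^'r"
  assumes TU: "totally_unimodular M" and "w \<in> row_space M"
  shows "sign_pattern w \<in> CAC M"
proof -
  have "\<exists>z :: real^'e. (\<forall>f. z $ f \<in> \<int> \<and> z $ f \<ge> 0) \<and>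
      (\<forall>f. f \<notin> supp w \<longrightarrow> z $ f = 0) \<and>
      axis e 1 + z \<in> row_space (reorient M (supp w) (\<lambda>f. sgn_int (w $ f))) \<inter> integer_vectors"
    if e: "e \<in> supp w" for e
  proof -
    have we: "w $ e \<noteq> 0" using e by (simp add: supp_def)
    obtain u where u: "u \<in> row_space M" "\<forall>f. u $ f \<in> {-1, 0, 1}" "conformal u w" "u $ e = sgn (w $ e)"
      by (rule TU_conformal_unit_vector[OF TU \<open>w \<in> row_space M\<close> we])
    have abs_u: "\<bar>u $ f\<bar> \<in> \<int>" for f
    proof -
      have "u $ f \<in> {-1, 0, 1}" using u(2) by blast
      then show ?thesis by auto
    qed
    then have "(\<chi> f. \<bar>u $ f\<bar>) \<in> integer_vectors" by (simp add: integer_vectors_def)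
    moreover define z :: "real^'e" where "z = (\<chi> f. if f = e then 0 else \<bar>u $ f\<bar>)"
    have "\<bar>u $ e\<bar> = 1" using u(4) we by (simp add: abs_sgn_eq)
    then have "axis e 1 + z = (\<chi> f. \<bar>u $ f\<bar>)"
      by (simp add: z_def axis_def Finite_Cartesian_Product.vec_eq_iff)
    moreover have "z $ f \<in> \<int> \<and> z $ f \<ge> 0" for f using abs_u by (simp add: z_def)
    moreover have "z $ f = 0" if "f \<notin> supp w" for f
      using conformal_supp_subset[OF u(3)] that by (auto simp: z_def supp_def)
    ultimately show ?thesis
      using abs_conformal_in_reoriented_row_space[OF u(1,3)] by (intro exI[of _ z]) auto
  qed
  then have "coherent_acyclic M (sign_pattern w)"
    using oriented_sub_sign_pattern[of w] unfolding coherent_acyclic_def by (simp add: sign_pattern_def)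
  then show ?thesis by (simp add: CAC_def)
qed

text \<open>Summing, over e \<in> S, the witnesses e + z_e reoriented back to Row(M) gives a vector whose
  coordinates have sign \<epsilon> on S (each is a sum of nonnegative terms, the e-th one at least 1)
  and vanish off S.\<close>
lemma CAC_imp_sign_pattern:
  fixes M :: "real^'e^'r"
  assumes "Se \<in> CAC M"
  obtains w where "w \<in> row_space M" "sign_pattern w = Se"
proof -
  obtain S \<epsilon> where Se: "Se = (S, \<epsilon>)" by (cases Se)
  have ca: "coherent_acyclic M (S, \<epsilon>)" using assms Se by (simp add: CAC_def)
  then have os: "oriented_sub (S, \<epsilon>)" by (simp add: coherent_acyclic_def)
  obtain z where z: "\<And>e f. e \<in> S \<Longrightarrow> z e $ f \<in> \<int> \<and> z e $ f \<ge> 0"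
    "\<And>e f. e \<in> S \<Longrightarrow> f \<notin> S \<Longrightarrow> z e $ f = 0"
    "\<And>e. e \<in> S \<Longrightarrow> axis e 1 + z e \<in> row_space (reorient M S \<epsilon>)"
    using ca unfolding coherent_acyclic_def by simp metis
  define x where "x e = axis e 1 + z e" for e
  define w where "w = (\<Sum>e\<in>S. \<chi> f. reorientation S \<epsilon> f * x e $ f)"
  have "(\<chi> f. reorientation S \<epsilon> f * x e $ f) \<in> row_space M" if "e \<in> S" for e
    using row_space_reorient[OF z(3)[OF that], of S \<epsilon>] unfolding reorient_reorient[OF os] x_def .
  then have "w \<in> row_space M" unfolding w_def by (simp add: subspace_sum subspace_row_space)
  have w_coord: "w $ f = reorientation S \<epsilon> f * (\<Sum>e\<in>S. x e $ f)" for f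
    by (simp add: w_def sum_distrib_left)
  have signs: "sgn_int (w $ f) = \<epsilon> f" for f
  proof (cases "f \<in> S")
    case True
    have "1 \<le> x f $ f" using z(1)[OF True] by (simp add: x_def axis_def)
    also have "\<dots> \<le> (\<Sum>e\<in>S. x e $ f)"
      using True z(1) by (intro member_le_sum) (auto simp: x_def axis_def)
    finally have "0 < (\<Sum>e\<in>S. x e $ f)" by simp
    moreover have "\<epsilon> f = 1 \<or> \<epsilon> f = -1" using os True by (simp add: oriented_sub_def)
    ultimately show ?thesis using True by (auto simp: w_coord sgn_int_def)
  next
    case False
    then have "(\<Sum>e\<in>S. x e $ f) = 0"
      using z(2) by (auto simp: x_def axis_def intro!: sum.neutral)
    then show ?thesis using os False by (simp add: w_coord sgn_int_def oriented_sub_def)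
  qed
  moreover have "supp w = S"
  proof -
    have "w $ f \<noteq> 0 \<longleftrightarrow> \<epsilon> f \<noteq> 0" for f
      using signs[of f] by (auto simp: sgn_int_def split: if_splits)
    moreover have "\<epsilon> f \<noteq> 0 \<longleftrightarrow> f \<in> S" for f using os by (auto simp: oriented_sub_def)
    ultimately show ?thesis by (auto simp: supp_def)
  qed
  ultimately have "sign_pattern w = Se" by (simp add: sign_pattern_def Se)
  then show thesis using that \<open>w \<in> row_space M\<close> by blast
qed

lemma poset_isomorphic_by_parametrisation:
  assumes f: "f ` W = A" and g: "g ` W = B"
    and order: "\<And>w w'. w \<in> W \<Longrightarrow> w' \<in> W \<Longrightarrow> leA (f w) (f w') \<longleftrightarrow> leB (g w) (g w')"
    and reflA: "\<And>a. a \<in> A \<Longrightarrow> leA a a"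
    and antisymA: "\<And>a b. a \<in> A \<Longrightarrow> b \<in> A \<Longrightarrow> leA a b \<Longrightarrow> leA b a \<Longrightarrow> a = b"
    and reflB: "\<And>b. b \<in> B \<Longrightarrow> leB b b"
    and antisymB: "\<And>a b. a \<in> B \<Longrightarrow> b \<in> B \<Longrightarrow> leB a b \<Longrightarrow> leB b a \<Longrightarrow> a = b"
  shows "poset_isomorphic A leA B leB"
proof -
  define \<phi> where "\<phi> = g \<circ> inv_into W f"
  have inv: "inv_into W f a \<in> W" "f (inv_into W f a) = a" if "a \<in> A" for a
    using that f by (auto intro: inv_into_into f_inv_into_f)
  have ord: "leA a b \<longleftrightarrow> leB (\<phi> a) (\<phi> b)" if "a \<in> A" "b \<in> A" for a b
    using order[OF inv(1)[OF that(1)] inv(1)[OF that(2)]] inv that by (simp add: \<phi>_def)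
  have "inj_on \<phi> A"
  proof
    fix a b assume "a \<in> A" "b \<in> A" "\<phi> a = \<phi> b"
    moreover have "\<phi> a \<in> B" using \<open>a \<in> A\<close> inv g by (auto simp: \<phi>_def)
    ultimately show "a = b" using ord reflB antisymA by metis
  qed
  moreover have "\<phi> ` A = B"
  proof
    show "\<phi> ` A \<subseteq> B" using inv g by (auto simp: \<phi>_def)
  next
    show "B \<subseteq> \<phi> ` A"
    proof
      fix b assume "b \<in> B"
      then obtain w where "w \<in> W" "b = g w" using g by auto
      moreover have "f w \<in> A" using \<open>w \<in> W\<close> f by auto
      moreover have "\<phi> (f w) = g w"
      proof -
        have w': "inv_into W f (f w) \<in> W" "f (inv_into W f (f w)) = f w" using inv \<open>f w \<in> A\<close> by auto
        then have "leB (\<phi> (f w)) (g w)" "leB (g w) (\<phi> (f w))"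
          using order[OF w'(1) \<open>w \<in> W\<close>] order[OF \<open>w \<in> W\<close> w'(1)] reflA \<open>f w \<in> A\<close>
          by (auto simp: \<phi>_def)
        then show ?thesis using antisymB g w'(1) \<open>w \<in> W\<close> by (auto simp: \<phi>_def)
      qed
      ultimately show "b \<in> \<phi> ` A" by force
    qed
  qed
  ultimately show ?thesis unfolding poset_isomorphic_def bij_betw_def using ord by blast
qed

theorem mainTheorem2:
  fixes M :: "real^'e^'r"
  assumes "totally_unimodular M"
  shows "poset_isomorphic (face_poset M) (\<subseteq>) (CAC M) cac_le"
proof (rule poset_isomorphic_by_parametrisation)
  note TU = assms
  show "voronoi_face M ` row_space M = face_poset M"
    using voronoi_face_in_face_poset[OF TU] face_poset_eq_voronoi_face[OF TU] by blast
  show "sign_pattern ` row_space M = CAC M"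
    using sign_pattern_in_CAC[OF TU] CAC_imp_sign_pattern by blast
  show "voronoi_face M w \<subseteq> voronoi_face M w' \<longleftrightarrow> cac_le (sign_pattern w) (sign_pattern w')"
    if "w \<in> row_space M" "w' \<in> row_space M" for w w'
    using voronoi_face_subset_imp_conformal[OF TU that] conformal_imp_voronoi_face_subset[OF TU that]
    by (auto simp: cac_le_sign_pattern_iff)
  show "cac_le Se Se" for Se by (simp add: cac_le_def)
  show "Se = Se'" if "Se \<in> CAC M" "Se' \<in> CAC M" "cac_le Se Se'" "cac_le Se' Se" for Se Se'
    using that cac_le_antisym[of Se Se'] by (simp add: CAC_def coherent_acyclic_def)
qed auto

end
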